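(* Let $p\in(1,\infty)$ and let $Y$ be a Banach space whose norm satisfies Rolewicz property $(\beta)$ with power type $p$. Then there exists $\gamma=\gamma(Y)>0$ such that for every non-contractive Lipschitz map $f\colon K_{\omega,1}\to Y$ there exists $i_0\in\mathbb N$ such that $$\|f(r)-f(t_{i_0})\|\le 2\left(\mathrm{Lip}(f)-\frac{\gamma}{\mathrm{Lip}(f)^{p-1}}\right).$$
   Context: For a Banach space $X$ with closed unit ball $B_X$ and a sequence $(y_n)_{n\ge1}$ in $X$, let $\mathrm{sep}[(y_n)]:=\inf\{\|y_m-y_n\|: m\neq n\}$. The $(\beta)$-modulus of the norm is $$\overline{\beta}_X(t):=1-\sup\Big\{\inf_{n\ge1}\tfrac{\|x+y_n\|}{2}\ :\ x\in B_X,\ (y_n)_{n\ge1}\subset B_X,\ \mathrm{sep}[(y_n)]\ge t\Big\}.$$ The norm satisfies Rolewicz property $(\beta)$ with power type $p$ (equivalently, has $(\beta)$-modulus of power type $p$) if there is a constant $c>0$ with $\overline{\beta}_X(t)\ge ct^p$ for all $t\in(0,2]$. $K_{\omega,1}$ is the star graph with a center $b$ and countably infinitely many leaves, each joined to $b$ by an edge; one leaf is denoted $r$ and the remaining leaves are labeled $(t_i)_{i\ge1}$. It carries the unweighted shortest-path metric $\rho$ (so $\rho(r,t_i)=2$, $\rho(t_i,t_j)=2$ for $i\ne j$, $\rho(b,\cdot)=1$ on leaves). A map $f$ between metric spaces is non-contractive if $d(f(x),f(y))\ge \rho(x,y)$ for all $x,y$; $\mathrm{Lip}(f)$ denotes its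 Lipschitz constant. *)

theory Defs
  imports "HOL-Analysis.Analysis"
begin

definition sep :: "(nat \<Rightarrow> 'a::real_normed_vector) \<Rightarrow> real" where
  "sep y = (INF mn \<in> {(m, n). m \<noteq> n}. norm (y (fst mn) - y (snd mn)))"

text \<open>The (beta)-modulus; the supremum is taken in the extended reals so that
  the supremum of an empty set is -infinity (modulus +infinity).\<close>
definition beta_modulus :: "'a::real_normed_vector itself \<Rightarrow> real \<Rightarrow> ereal" where
  "beta_modulus TYPE('a) t = 1 - Sup {ereal (INF n. norm (x + y n) / 2) | x (y :: nat \<Rightarrow> 'a).
       norm x \<le> 1 \<and> (\<forall>n. norm (y n) \<le> 1) \<and> sep y \<ge> t}"

definition beta_power_type :: "'a::real_normed_vector itself \<Rightarrow> real \<Rightarrow> bool" where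
  "beta_power_type TYPE('a) p \<longleftrightarrow>
     (\<exists>c>0. \<forall>t. 0 < t \<and> t \<le> 2 \<longrightarrow> beta_modulus TYPE('a) t \<ge> ereal (c * t powr p))"

text \<open>The star graph K_{omega,1}: center b, distinguished leaf r, leaves t_i.\<close>
datatype kvert = Ctr | Rt | Lf nat

definition rho :: "kvert \<Rightarrow> kvert \<Rightarrow> real" where
  "rho u v = (if u = v then 0 else if u = Ctr \<or> v = Ctr then 1 else 2)"

definition lipschitz_K :: "(kvert \<Rightarrow> 'a::real_normed_vector) \<Rightarrow> bool" where
  "lipschitz_K f \<longleftrightarrow> (\<exists>C. \<forall>u v. norm (f u - f v) \<le> C * rho u v)"

definition noncontractive_K :: "(kvert \<Rightarrow> 'a::real_normed_vector) \<Rightarrow> bool" where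
  "noncontractive_K f \<longleftrightarrow> (\<forall>u v. norm (f u - f v) \<ge> rho u v)"

definition Lip_K :: "(kvert \<Rightarrow> 'a::real_normed_vector) \<Rightarrow> real" where
  "Lip_K f = (SUP uv \<in> {(u, v). u \<noteq> v}. norm (f (fst uv) - f (snd uv)) / rho (fst uv) (snd uv))"

end

theory Submission
  imports Defs
begin

text \<open>Normalise by L = Lip f: the points x = (f r - f b)/L and y_n = (f b - f t_n)/L lie in the
  unit ball, and non-contractivity makes (y_n) (2/L)-separated. The (\<beta>)-modulus bound then gives
  an n with \<parallel>x + y_n\<parallel> \<le> 2 - c (2/L)^p, and multiplying back by L yields
  \<parallel>f r - f t_n\<parallel> \<le> 2 (L - c 2^(p-1) / L^(p-1)).\<close>

lemma sep_ge:
  assumes "\<And>m n. m \<noteq> n \<Longrightarrow> t \<le> norm (y m - y n)"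
  shows "t \<le> sep y"
  unfolding sep_def
proof (rule cINF_greatest)
  have "(0::nat, 1::nat) \<in> {(m, n). m \<noteq> n}"
    by simp
  then show "{(m::nat, n::nat). m \<noteq> n} \<noteq> {}"
    by blast
qed (use assms in auto)

lemma beta_modulus_witness:
  fixes x :: "'a::real_normed_vector" and y :: "nat \<Rightarrow> 'a"
  assumes "ereal \<delta> \<le> beta_modulus TYPE('a) t" and "0 < \<delta>"
    and "norm x \<le> 1" and "\<And>n. norm (y n) \<le> 1" and "t \<le> sep y"
  shows "\<exists>n. norm (x + y n) \<le> 2 - \<delta>"
proof -
  define I where "I = (INF n. norm (x + y n) / 2)"
  have "ereal I \<in> {ereal (INF n. norm (x + y n) / 2) | x (y :: nat \<Rightarrow> 'a).
       norm x \<le> 1 \<and> (\<forall>n. norm (y n) \<le> 1) \<and> sep y \<ge> t}"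
    using assms(3-5) unfolding I_def by blast
  then have "ereal \<delta> \<le> 1 - ereal I"
    using assms(1) unfolding beta_modulus_def
    by (meson Sup_upper ereal_minus_mono order.refl order_trans)
  also have "1 - ereal I = ereal (1 - I)"
    by (simp add: one_ereal_def)
  finally have "I < 1 - \<delta> / 2"
    using assms(2) by simp
  moreover have "bdd_below (range (\<lambda>n. norm (x + y n) / 2))"
    by (rule bdd_belowI2[of _ 0]) simp
  ultimately obtain n where "norm (x + y n) / 2 < 1 - \<delta> / 2"
    unfolding I_def by (subst (asm) cINF_less_iff) auto
  then show ?thesis
    by (intro exI[of _ n]) simp
qed

lemma rho_pos: "u \<noteq> v \<Longrightarrow> 0 < rho u v"
  by (simp add: rho_def)

lemma Lip_K_bound:
  assumes "lipschitz_K f"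
  shows "norm (f u - f v) \<le> Lip_K f * rho u v"
proof (cases "u = v")
  case False
  obtain C where C: "\<And>u v. norm (f u - f v) \<le> C * rho u v"
    using assms unfolding lipschitz_K_def by blast
  have bdd: "bdd_above ((\<lambda>uv. norm (f (fst uv) - f (snd uv)) / rho (fst uv) (snd uv)) `
          {(u, v). u \<noteq> v})"
  proof (rule bdd_aboveI2)
    fix uv :: "kvert \<times> kvert"
    assume "uv \<in> {(u, v). u \<noteq> v}"
    then show "norm (f (fst uv) - f (snd uv)) / rho (fst uv) (snd uv) \<le> C"
      using C[of "fst uv" "snd uv"] rho_pos[of "fst uv" "snd uv"]
      by (auto simp: divide_le_eq)
  qed
  have "(u, v) \<in> {(u, v). u \<noteq> v}"
    using False by simp
  from cSUP_upper[OF this bdd] have "norm (f u - f v) / rho u v \<le> Lip_K f"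
    unfolding Lip_K_def by simp
  then show ?thesis
    using rho_pos[OF False] by (simp add: divide_le_eq mult.commute)
qed (simp add: rho_def)

lemma Lip_K_ge_one:
  assumes "lipschitz_K f" and "noncontractive_K f"
  shows "1 \<le> Lip_K f"
proof -
  have "rho Rt Ctr = 1"
    by (simp add: rho_def)
  then show ?thesis
    using Lip_K_bound[OF assms(1), of Rt Ctr] assms(2)
    unfolding noncontractive_K_def by (metis mult_cancel_left2 order_trans)
qed

lemma star_leaf_distance_bound:
  fixes f :: "kvert \<Rightarrow> 'a::real_normed_vector"
  assumes "0 < c"
    and beta: "\<And>t. 0 < t \<Longrightarrow> t \<le> 2 \<Longrightarrow> ereal (c * t powr p) \<le> beta_modulus TYPE('a) t"
    and lip: "lipschitz_K f" and nc: "noncontractive_K f"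
  shows "\<exists>i. norm (f Rt - f (Lf i)) \<le> 2 * (Lip_K f - c * 2 powr (p - 1) / Lip_K f powr (p - 1))"
proof -
  define L where "L = Lip_K f"
  have L1: "1 \<le> L"
    unfolding L_def using Lip_K_ge_one[OF lip nc] .
  have bound: "norm (f u - f v) \<le> L * rho u v" for u v
    unfolding L_def using Lip_K_bound[OF lip] .
  define x where "x = (f Rt - f Ctr) /\<^sub>R L"
  define y where "y = (\<lambda>n. (f Ctr - f (Lf n)) /\<^sub>R L)"
  have norm_div: "norm (v /\<^sub>R L) = norm v / L" for v :: 'a
    using L1 by (simp add: divide_inverse_commute)
  have "norm x \<le> 1"
    unfolding x_def norm_div using bound[of Rt Ctr] L1 by (simp add: rho_def)
  moreover have "norm (y n) \<le> 1" for n
    unfolding y_def norm_div using bound[of Ctr "Lf n"] L1 by (simp add: rho_def)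
  moreover have "2 / L \<le> sep y"
  proof (rule sep_ge)
    fix m n :: nat
    assume "m \<noteq> n"
    then have "rho (Lf n) (Lf m) = 2"
      by (simp add: rho_def)
    then have "2 / L \<le> norm (f (Lf n) - f (Lf m)) / L"
      using nc L1 unfolding noncontractive_K_def by (metis divide_right_mono zero_le_one order_trans)
    moreover have "y m - y n = (f (Lf n) - f (Lf m)) /\<^sub>R L"
      unfolding y_def by (simp add: algebra_simps)
    ultimately show "2 / L \<le> norm (y m - y n)"
      by (simp only: norm_div)
  qed
  moreover have "0 < 2 / L" "2 / L \<le> 2"
    using L1 by (auto simp: divide_le_eq)
  moreover have "0 < c * (2 / L) powr p"
    using \<open>0 < c\<close> L1 by simp
  ultimately obtain i where i: "norm (x + y i) \<le> 2 - c * (2 / L) powr p"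
    using beta_modulus_witness[OF beta[of "2 / L"]] by blast
  have "f Rt - f (Lf i) = L *\<^sub>R (x + y i)"
    using L1 by (simp add: x_def y_def algebra_simps)
  then have "norm (f Rt - f (Lf i)) = L * norm (x + y i)"
    using L1 by simp
  also have "\<dots> \<le> L * (2 - c * (2 / L) powr p)"
    using i L1 by simp
  also have "\<dots> = 2 * (L - c * 2 powr (p - 1) / L powr (p - 1))"
  proof -
    have "2 powr p = 2 * 2 powr (p - 1)" "L powr p = L * L powr (p - 1)"
      using L1 by (simp_all add: powr_diff)
    then show ?thesis
      using L1 by (simp add: powr_divide field_simps)
  qed
  finally show ?thesis
    unfolding L_def by blast
qed

theorem lemma1:
  fixes p :: real
  assumes "1 < p"
    and "beta_power_type TYPE('a::banach) p"
  shows "\<exists>\<gamma>>0. \<forall>f :: kvert \<Rightarrow> 'a. lipschitz_K f \<and> noncontractive_K f \<longrightarrow>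
           (\<exists>i0. norm (f Rt - f (Lf i0)) \<le> 2 * (Lip_K f - \<gamma> / Lip_K f powr (p - 1)))"
proof -
  obtain c where "0 < c"
    and "\<And>t. 0 < t \<Longrightarrow> t \<le> 2 \<Longrightarrow> ereal (c * t powr p) \<le> beta_modulus TYPE('a) t"
    using assms(2) unfolding beta_power_type_def by blast
  then show ?thesis
    using star_leaf_distance_bound[where 'a = 'a] by (intro exI[of _ "c * 2 powr (p - 1)"]) simp
qed

end
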